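(* For every $a \in \mathbb{N}$ and every integer $b \ge 2$, $R_\mathrm{ord}(S_a^\mathrm{sc}, C_b^\mathrm{mon}) = 1 + (a-1)(b-1)$.
   Context: All graphs are finite, simple and undirected, and a graph of order $n$ has vertex set $\{0,1,\ldots,n-1\}$; $K_n$ is the complete graph on $\{0,\ldots,n-1\}$. A $2$-edge-coloring of $K_n$ assigns each edge a color in $\{1,2\}$. For a graph $H$ and such a coloring, an embedding of $H$ in color $j$ is an injective map $\varphi\colon V(H)\to V(K_n)$ such that for every edge $uv$ of $H$ the edge $\{\varphi(u),\varphi(v)\}$ has color $j$; it is increasing if $\varphi(0)<\cdots<\varphi(|H|-1)$. The ordered Ramsey number $R_\mathrm{ord}(H_1,H_2)$ is the smallest $n$ such that every $2$-edge-coloring of $K_n$ admits an increasing embedding of $H_1$ in color $1$ or an increasing embedding of $H_2$ in color $2$. The start-central star $S_n^\mathrm{sc}$ is the graph of order $n$ whose edges are exactly $\{0,v\}$ for $1\le v\le n-1$. For $n\ge3$ the monotone cycle $C_n^\mathrm{mon}$ has edges $\{i,i+1\}$ ($0\le i\le n-2$) and $\{0,n-1\}$; by convention $C_2^\mathrm{mon}=K_2$. *)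

theory Defs
  imports Main
begin

text \<open>A graph of order n is a pair (n, E) with vertex set {0..<n} and edge set E,
  each edge a 2-element subset of {0..<n}.\<close>
type_synonym graph = "nat \<times> nat set set"

definition gorder :: "graph \<Rightarrow> nat" where "gorder H = fst H"
definition gedges :: "graph \<Rightarrow> nat set set" where "gedges H = snd H"

definition two_coloring :: "nat \<Rightarrow> (nat set \<Rightarrow> nat) \<Rightarrow> bool" where
  "two_coloring n c \<longleftrightarrow> (\<forall>e. e \<subseteq> {..<n} \<and> card e = 2 \<longrightarrow> c e \<in> {1,2})"

definition inc_embedding ::
  "nat \<Rightarrow> (nat set \<Rightarrow> nat) \<Rightarrow> graph \<Rightarrow> nat \<Rightarrow> (nat \<Rightarrow> nat) \<Rightarrow> bool" where
  "inc_embedding n c H j \<phi> \<longleftrightarrow>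
     strict_mono_on {..<gorder H} \<phi> \<and>
     \<phi> ` {..<gorder H} \<subseteq> {..<n} \<and>
     (\<forall>e\<in>gedges H. c (\<phi> ` e) = j)"

definition has_inc_embedding :: "nat \<Rightarrow> (nat set \<Rightarrow> nat) \<Rightarrow> graph \<Rightarrow> nat \<Rightarrow> bool" where
  "has_inc_embedding n c H j \<longleftrightarrow> (\<exists>\<phi>. inc_embedding n c H j \<phi>)"

definition ord_ramsey :: "graph \<Rightarrow> graph \<Rightarrow> nat" where
  "ord_ramsey H1 H2 = (LEAST n. \<forall>c. two_coloring n c \<longrightarrow>
      has_inc_embedding n c H1 1 \<or> has_inc_embedding n c H2 2)"

definition star_sc :: "nat \<Rightarrow> graph" where
  "star_sc n = (n, {{0, v} | v. 1 \<le> v \<and> v \<le> n - 1})"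

definition mon_cycle :: "nat \<Rightarrow> graph" where
  "mon_cycle n = (if n = 2 then (2, {{0, 1}})
     else (n, {{i, i + 1} | i. i + 2 \<le> n} \<union> {{0, n - 1}}))"

end

theory Submission
  imports Defs
begin

(* Upper bound: if some vertex has a - 1 later neighbours in colour 1, it is the centre of a
   colour-1 star. Otherwise every vertex has at most a - 2 later colour-1 neighbours, and a greedy
   walk (always step from the least remaining vertex to its later colour-2 neighbours) loses at most
   a - 1 vertices per step. Run inside the later colour-2 neighbourhood of vertex 0, which has more
   than (a - 1)(b - 2) elements, it produces an increasing colour-2 path on b - 1 vertices, and
   vertex 0 closes it to a monotone colour-2 cycle.
   Lower bound: cut (a - 1)(b - 1) vertices into b - 1 intervals of length a - 1, colour 1 inside
   the intervals and 2 between them. A colour-1 start-central star needs a vertices in one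
   interval; a monotone colour-2 cycle visits b distinct intervals in increasing order. *)

lemma successively_nth:
  assumes "successively P xs" "Suc i < length xs"
  shows "P (xs ! i) (xs ! Suc i)"
  using assms
proof (induction P xs arbitrary: i rule: successively.induct)
  case (3 P x y xs)
  then show ?case by (cases i) auto
qed auto

lemma strict_mono_on_lessThan_add_le:
  fixes \<phi> :: "nat \<Rightarrow> nat"
  assumes "strict_mono_on {..<n} \<phi>" "i < n"
  shows "\<phi> 0 + i \<le> \<phi> i"
  using assms(2)
proof (induction i)
  case (Suc i)
  have "\<phi> i < \<phi> (Suc i)" using assms(1) Suc.prems by (simp add: strict_mono_on_def)
  with Suc show ?case by simp
qed simp

lemma gorder_star_sc [simp]: "gorder (star_sc a) = a"
  by (simp add: gorder_def star_sc_def)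

lemma gedges_star_sc: "gedges (star_sc a) = {{0, u} | u. 1 \<le> u \<and> u \<le> a - 1}"
  by (simp add: gedges_def star_sc_def)

lemma gorder_mon_cycle [simp]: "gorder (mon_cycle b) = b"
  by (simp add: gorder_def mon_cycle_def)

lemma gedges_mon_cycle:
  assumes "2 \<le> b"
  shows "gedges (mon_cycle b) = {{i, Suc i} | i. i + 2 \<le> b} \<union> {{0, b - 1}}"
  using assms by (auto simp: gedges_def mon_cycle_def)

lemma has_inc_embedding_nthI:
  assumes "sorted_wrt (<) xs" "length xs = gorder H" "set xs \<subseteq> {..<n}"
    and "\<forall>e\<in>gedges H. c ((!) xs ` e) = j"
  shows "has_inc_embedding n c H j"
proof -
  have "strict_mono_on {..<gorder H} ((!) xs)"
    using assms(1,2) by (auto intro!: strict_mono_onI simp: sorted_wrt_iff_nth_less)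
  moreover have "(!) xs ` {..<gorder H} \<subseteq> {..<n}"
    using assms(2,3) nth_mem by (auto simp: image_subset_iff subset_iff)
  ultimately show ?thesis
    using assms(4) by (auto simp: has_inc_embedding_def inc_embedding_def)
qed

lemma not_has_inc_embedding_0:
  assumes "0 < gorder H"
  shows "\<not> has_inc_embedding 0 c H j"
  using assms by (auto simp: has_inc_embedding_def inc_embedding_def)

lemma two_coloring_pair:
  assumes "two_coloring n c" "x < n" "y < n" "x \<noteq> y"
  shows "c {x, y} = 1 \<or> c {x, y} = 2"
proof -
  have "{x, y} \<subseteq> {..<n}" "card {x, y} = 2"
    using assms(2-4) by auto
  then show ?thesis
    using assms(1) unfolding two_coloring_def by blast
qed

definition fwd_nbhd :: "nat \<Rightarrow> (nat set \<Rightarrow> nat) \<Rightarrow> nat \<Rightarrow> nat \<Rightarrow> nat set" where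
  "fwd_nbhd n c j v = {w. v < w \<and> w < n \<and> c {v, w} = j}"

lemma finite_fwd_nbhd [simp]: "finite (fwd_nbhd n c j v)"
  by (simp add: fwd_nbhd_def)

lemma card_fwd_nbhd_split:
  assumes "two_coloring n c" "v < n"
  shows "card (fwd_nbhd n c 1 v) + card (fwd_nbhd n c 2 v) = n - Suc v"
proof -
  have "w \<in> fwd_nbhd n c 1 v \<union> fwd_nbhd n c 2 v" if "w \<in> {v<..<n}" for w
    using that two_coloring_pair[OF assms, of w] by (auto simp: fwd_nbhd_def)
  then have "{v<..<n} = fwd_nbhd n c 1 v \<union> fwd_nbhd n c 2 v"
    by (intro subset_antisym subsetI) (auto simp: fwd_nbhd_def)
  moreover have "fwd_nbhd n c 1 v \<inter> fwd_nbhd n c 2 v = {}"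
    by (auto simp: fwd_nbhd_def)
  ultimately have "card {v<..<n} = card (fwd_nbhd n c 1 v) + card (fwd_nbhd n c 2 v)"
    by (simp add: card_Un_disjoint fwd_nbhd_def)
  then show ?thesis by simp
qed

lemma has_inc_embedding_star_sc:
  assumes "0 < a" "v < n" "a - 1 \<le> card (fwd_nbhd n c j v)"
  shows "has_inc_embedding n c (star_sc a) j"
proof -
  define ys where "ys = take (a - 1) (sorted_list_of_set (fwd_nbhd n c j v))"
  have len: "length ys = a - 1"
    using assms(3) by (simp add: ys_def)
  have ys_nbhd: "set ys \<subseteq> fwd_nbhd n c j v"
    unfolding ys_def using set_take_subset by fastforce
  show ?thesis
  proof (rule has_inc_embedding_nthI[where xs = "v # ys"])
    have "sorted_wrt (<) ys"
      by (simp add: ys_def)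
    with ys_nbhd show "sorted_wrt (<) (v # ys)"
      by (auto simp: fwd_nbhd_def)
    show "set (v # ys) \<subseteq> {..<n}"
      using ys_nbhd assms(2) by (auto simp: fwd_nbhd_def)
    show "\<forall>e\<in>gedges (star_sc a). c ((!) (v # ys) ` e) = j"
    proof
      fix e assume "e \<in> gedges (star_sc a)"
      then obtain u where u: "e = {0, u}" "1 \<le> u" "u \<le> a - 1"
        by (auto simp: gedges_star_sc)
      then have "ys ! (u - 1) \<in> set ys"
        using len by simp
      with ys_nbhd have "ys ! (u - 1) \<in> fwd_nbhd n c j v"
        by blast
      moreover have "(!) (v # ys) ` e = {v, ys ! (u - 1)}"
        using u by (auto simp: nth_Cons')
      ultimately show "c ((!) (v # ys) ` e) = j"
        by (simp add: fwd_nbhd_def)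
    qed
  qed (use len assms(1) in simp)
qed

lemma has_inc_embedding_mon_cycle:
  assumes "2 \<le> length xs" "sorted_wrt (<) xs" "set xs \<subseteq> {..<n}"
    and "successively (\<lambda>x y. c {x, y} = j) xs" "c {hd xs, last xs} = j"
  shows "has_inc_embedding n c (mon_cycle (length xs)) j"
proof (rule has_inc_embedding_nthI[OF assms(2) _ assms(3)])
  show "\<forall>e\<in>gedges (mon_cycle (length xs)). c ((!) xs ` e) = j"
  proof
    fix e assume "e \<in> gedges (mon_cycle (length xs))"
    then consider (path) i where "e = {i, Suc i}" "i + 2 \<le> length xs"
      | (closing) "e = {0, length xs - 1}"
      using gedges_mon_cycle[OF assms(1)] by blast
    then show "c ((!) xs ` e) = j"
    proof cases
      case path
      then show ?thesis using successively_nth[OF assms(4)] by simp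
    next
      case closing
      moreover have "xs \<noteq> []"
        using assms(1) by auto
      ultimately have "(!) xs ` e = {hd xs, last xs}"
        by (simp add: hd_conv_nth last_conv_nth)
      then show ?thesis using assms(5) by simp
    qed
  qed
qed simp

(* Greedy step: among the vertices after v = Min S fewer than k fail R v, so the R-successors of v
   in S still have more than k * j elements. *)
lemma ex_sorted_successively_list:
  fixes S :: "nat set"
  assumes "\<forall>v\<in>S. card {w\<in>S. v < w \<and> \<not> R v w} < k" "k * j < card S"
  shows "\<exists>xs. length xs = Suc j \<and> set xs \<subseteq> S \<and> sorted_wrt (<) xs \<and> successively R xs"
  using assms
proof (induction j arbitrary: S)
  case 0
  then obtain x where "x \<in> S" by fastforce
  then show ?case by (intro exI[of _ "[x]"]) simp
next
  case (Suc j)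
  have "finite S" "S \<noteq> {}"
    using Suc.prems(2) card_gt_0_iff[of S] by auto
  define v where "v = Min S"
  have v: "v \<in> S" "\<forall>w\<in>S. v \<le> w"
    using \<open>finite S\<close> \<open>S \<noteq> {}\<close> by (simp_all add: v_def)
  define S' where "S' = {w\<in>S. v < w \<and> R v w}"
  define B where "B = {w\<in>S. v < w \<and> \<not> R v w}"
  have "S \<subseteq> insert v (S' \<union> B)"
    using v(2) by (force simp: S'_def B_def)
  have "finite (S' \<union> B)"
    using \<open>finite S\<close> by (simp add: S'_def B_def)
  have "card S \<le> card (insert v (S' \<union> B))"
    using \<open>S \<subseteq> insert v (S' \<union> B)\<close> \<open>finite (S' \<union> B)\<close> by (intro card_mono) simp_all
  also have "\<dots> \<le> Suc (card (S' \<union> B))"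
    using \<open>finite (S' \<union> B)\<close> by (simp add: card_insert_if)
  also have "\<dots> \<le> Suc (card S' + card B)"
    using card_Un_le by simp
  finally have "card S \<le> Suc (card S' + card B)" .
  moreover have "card B < k"
    using Suc.prems(1) v(1) by (simp add: B_def)
  ultimately have "k * j < card S'"
    using Suc.prems(2) by simp
  moreover have "\<forall>u\<in>S'. card {w\<in>S'. u < w \<and> \<not> R u w} < k"
  proof
    fix u assume "u \<in> S'"
    then have "card {w\<in>S'. u < w \<and> \<not> R u w} \<le> card {w\<in>S. u < w \<and> \<not> R u w}"
      using \<open>finite S\<close> by (intro card_mono) (auto simp: S'_def)
    also have "\<dots> < k"
      using Suc.prems(1) \<open>u \<in> S'\<close> by (simp add: S'_def)
    finally show "card {w\<in>S'. u < w \<and> \<not> R u w} < k" .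
  qed
  ultimately obtain xs where xs: "length xs = Suc j" "set xs \<subseteq> S'"
      "sorted_wrt (<) xs" "successively R xs"
    using Suc.IH by blast
  have "hd xs \<in> set xs"
    using xs(1) by (cases xs) simp_all
  with xs show ?case
    by (intro exI[of _ "v # xs"]) (auto simp: S'_def successively_Cons v(1))
qed

lemma has_inc_embedding_mon_cycle_if_sparse:
  assumes "two_coloring n c" "2 \<le> b" "k * (b - 1) < n"
    and sparse: "\<And>v. v < n \<Longrightarrow> card (fwd_nbhd n c 1 v) < k"
  shows "has_inc_embedding n c (mon_cycle b) 2"
proof -
  define S where "S = fwd_nbhd n c 2 0"
  have "0 < n" using assms(3) by simp
  have "b - 1 = Suc (b - 2)"
    using assms(2) by simp
  then have "k * (b - 1) = k * (b - 2) + k"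
    by simp
  then have "k * (b - 2) < card S"
    using card_fwd_nbhd_split[OF assms(1) \<open>0 < n\<close>] sparse[OF \<open>0 < n\<close>] assms(3)
    unfolding S_def by linarith
  moreover have "\<forall>v\<in>S. card {w\<in>S. v < w \<and> c {v, w} \<noteq> 2} < k"
  proof
    fix v assume "v \<in> S"
    then have "v < n" by (simp add: S_def fwd_nbhd_def)
    have "{w\<in>S. v < w \<and> c {v, w} \<noteq> 2} \<subseteq> fwd_nbhd n c 1 v"
      using two_coloring_pair[OF assms(1) \<open>v < n\<close>] by (auto simp: S_def fwd_nbhd_def)
    then have "card {w\<in>S. v < w \<and> c {v, w} \<noteq> 2} \<le> card (fwd_nbhd n c 1 v)"
      by (intro card_mono) simp_all
    with sparse[OF \<open>v < n\<close>] show "card {w\<in>S. v < w \<and> c {v, w} \<noteq> 2} < k"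
      by linarith
  qed
  ultimately obtain ps where ps: "length ps = Suc (b - 2)" "set ps \<subseteq> S"
      "sorted_wrt (<) ps" "successively (\<lambda>x y. c {x, y} = 2) ps"
    using ex_sorted_successively_list[where R = "\<lambda>x y. c {x, y} = 2"] by blast
  have "ps \<noteq> []" using ps(1) by auto
  then have ends: "hd ps \<in> S" "last ps \<in> S"
    using ps(2) by auto
  have "has_inc_embedding n c (mon_cycle (length (0 # ps))) 2"
  proof (rule has_inc_embedding_mon_cycle)
    show "sorted_wrt (<) (0 # ps)" "set (0 # ps) \<subseteq> {..<n}"
      using ps(2,3) \<open>0 < n\<close> by (auto simp: S_def fwd_nbhd_def)
    show "successively (\<lambda>x y. c {x, y} = 2) (0 # ps)" "c {hd (0 # ps), last (0 # ps)} = 2"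
      using ps(4) ends \<open>ps \<noteq> []\<close> by (auto simp: successively_Cons S_def fwd_nbhd_def)
  qed (use ps(1) in simp)
  moreover have "length (0 # ps) = b"
    using ps(1) assms(2) by simp
  ultimately show ?thesis by simp
qed

definition ramsey_arrows :: "nat \<Rightarrow> graph \<Rightarrow> graph \<Rightarrow> bool" where
  "ramsey_arrows n H1 H2 \<longleftrightarrow>
     (\<forall>c. two_coloring n c \<longrightarrow> has_inc_embedding n c H1 1 \<or> has_inc_embedding n c H2 2)"

lemma ord_ramsey_eqI:
  assumes "ramsey_arrows n H1 H2" "\<And>m. m < n \<Longrightarrow> \<not> ramsey_arrows m H1 H2"
  shows "ord_ramsey H1 H2 = n"
  unfolding ord_ramsey_def ramsey_arrows_def[symmetric]
  by (rule Least_equality) (use assms in \<open>auto simp: not_less[symmetric]\<close>)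

lemma ramsey_arrows_star_sc_mon_cycle:
  assumes "0 < a" "2 \<le> b" "(a - 1) * (b - 1) < n"
  shows "ramsey_arrows n (star_sc a) (mon_cycle b)"
  unfolding ramsey_arrows_def
proof (intro allI impI)
  fix c assume "two_coloring n c"
  show "has_inc_embedding n c (star_sc a) 1 \<or> has_inc_embedding n c (mon_cycle b) 2"
  proof (cases "\<exists>v<n. a - 1 \<le> card (fwd_nbhd n c 1 v)")
    case True
    then show ?thesis using has_inc_embedding_star_sc[OF assms(1)] by blast
  next
    case False
    then have "has_inc_embedding n c (mon_cycle b) 2"
      using assms(2,3) \<open>two_coloring n c\<close>
      by (intro has_inc_embedding_mon_cycle_if_sparse[where k = "a - 1"]) auto
    then show ?thesis ..
  qed
qed

(* Colour 1 exactly on the edges inside one interval {q * k ..< (q + 1) * k}. *)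
definition block_coloring :: "nat \<Rightarrow> nat set \<Rightarrow> nat" where
  "block_coloring k e = (if card ((\<lambda>x. x div k) ` e) = 1 then 1 else 2)"

lemma block_coloring_pair:
  "block_coloring k {x, y} = (if x div k = y div k then 1 else 2)"
  by (simp add: block_coloring_def card_insert_if)

lemma two_coloring_block_coloring: "two_coloring n (block_coloring k)"
  by (simp add: two_coloring_def block_coloring_def)

lemma star_sc_not_in_block_coloring:
  assumes "0 < k"
  shows "\<not> has_inc_embedding n (block_coloring k) (star_sc (Suc k)) 1"
proof
  assume "has_inc_embedding n (block_coloring k) (star_sc (Suc k)) 1"
  then obtain \<phi> where mono: "strict_mono_on {..<Suc k} \<phi>"
      and edges: "\<forall>e\<in>gedges (star_sc (Suc k)). block_coloring k (\<phi> ` e) = 1"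
    by (auto simp: has_inc_embedding_def inc_embedding_def)
  have "{0, k} \<in> gedges (star_sc (Suc k))"
    using assms by (auto simp: gedges_star_sc)
  with edges have same_block: "\<phi> 0 div k = \<phi> k div k"
    by (force simp: block_coloring_pair split: if_splits)
  have "(\<phi> 0 + k) div k \<le> \<phi> k div k"
    using strict_mono_on_lessThan_add_le[OF mono, of k] by (simp add: div_le_mono)
  moreover have "(\<phi> 0 + k) div k = \<phi> 0 div k + 1"
    using assms by (simp add: div_add_self2)
  ultimately show False
    using same_block by linarith
qed

lemma mon_cycle_not_in_block_coloring:
  assumes "2 \<le> b" "n \<le> k * (b - 1)"
  shows "\<not> has_inc_embedding n (block_coloring k) (mon_cycle b) 2"
proof
  assume "has_inc_embedding n (block_coloring k) (mon_cycle b) 2"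
  then obtain \<phi> where mono: "strict_mono_on {..<b} \<phi>" and range: "\<phi> ` {..<b} \<subseteq> {..<n}"
      and edges: "\<forall>e\<in>gedges (mon_cycle b). block_coloring k (\<phi> ` e) = 2"
    by (auto simp: has_inc_embedding_def inc_embedding_def)
  have block_grows: "i \<le> \<phi> i div k" if "i < b" for i
    using that
  proof (induction i)
    case (Suc i)
    have "{i, Suc i} \<in> gedges (mon_cycle b)"
      using Suc.prems assms(1) by (auto simp: gedges_mon_cycle)
    with edges have "\<phi> i div k \<noteq> \<phi> (Suc i) div k"
      by (force simp: block_coloring_pair split: if_splits)
    moreover have "\<phi> i div k \<le> \<phi> (Suc i) div k"
      using mono Suc.prems by (intro div_le_mono less_imp_le) (simp add: strict_mono_on_def)
    ultimately show ?case using Suc by simp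
  qed simp
  have "\<phi> (b - 1) < n"
    using range assms(1) by (auto simp: image_subset_iff)
  with assms(2) have "\<phi> (b - 1) div k < b - 1"
    by (intro less_mult_imp_div_less) (simp add: mult.commute)
  moreover have "b - 1 \<le> \<phi> (b - 1) div k"
    using block_grows assms(1) by simp
  ultimately show False by simp
qed

lemma not_ramsey_arrows_star_sc_mon_cycle:
  assumes "0 < a" "2 \<le> b" "m \<le> (a - 1) * (b - 1)"
  shows "\<not> ramsey_arrows m (star_sc a) (mon_cycle b)"
proof -
  have "\<not> has_inc_embedding m (block_coloring (a - 1)) (mon_cycle b) 2"
    using assms(2,3) by (intro mon_cycle_not_in_block_coloring) (simp_all add: mult.commute)
  moreover have "\<not> has_inc_embedding m (block_coloring (a - 1)) (star_sc a) 1"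
  proof (cases "a = 1")
    case True
    with assms(3) show ?thesis by (simp add: not_has_inc_embedding_0)
  next
    case False
    with assms(1) star_sc_not_in_block_coloring[of "a - 1" m] show ?thesis by simp
  qed
  ultimately show ?thesis
    using two_coloring_block_coloring unfolding ramsey_arrows_def by blast
qed

theorem theorem4p18:
  fixes a b :: nat
  assumes "1 \<le> a" and "2 \<le> b"
  shows "ord_ramsey (star_sc a) (mon_cycle b) = 1 + (a - 1) * (b - 1)"
proof (rule ord_ramsey_eqI)
  show "ramsey_arrows (1 + (a - 1) * (b - 1)) (star_sc a) (mon_cycle b)"
    using assms by (intro ramsey_arrows_star_sc_mon_cycle) simp_all
  show "\<not> ramsey_arrows m (star_sc a) (mon_cycle b)" if "m < 1 + (a - 1) * (b - 1)" for m
    using assms that by (intro not_ramsey_arrows_star_sc_mon_cycle) simp_all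
qed

end
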